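(* For every $i$, $s_{i+1}+r_{i+1}\leq s_i$.
   Context: Consider a finite rooted tree $T_0$ with node set $V_{\mathrm{int}}$; for a node $w$, $w'$ denotes its unique predecessor. Each node $v$ carries an integer $r_v$ (the exponential divergence rate of its multiplier $u_v$ as $t\to\infty$). Define recursively, starting from the end nodes (where $s_v:=0$), $s_v:=\sum_{w'=v}\max(0,n_w)$ and $n_v:=r_v+s_v$, computed in the original tree $T_0$. Build a sequence of trees: $T_0$ has root $v_0$; given $T_i$ with root $v_i$, choose a successor $v_{i+1}$ of $v_i$ in $T_i$ and form $T_{i+1}$ by contracting the line from $v_{i+1}$ to $v_i$: the node $v_i$ is erased, all subtrees originally entering $v_{i+1}$ are reattached to the root, together with the remaining subtrees entering $v_i$, and the root is renamed $v_{i+1}$ (carrying the multiplier $u_{v_{i+1}}$). Set $r_i:=r_{v_i}$ and $s_i:=\sum_{w\in T_i:\,w'=v_i}\max(0,n_w)$, where the sum is over the successors of the root $v_i$ in $T_i$ and the $n_w$ are those computed in $T_0$. *)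

theory Defs
  imports Main
begin

text \<open>A finite rooted tree is given by a finite node set V, a root rt \<in> V and a
predecessor function par (meaningful on V - {rt}); every node reaches the root
by iterating par.\<close>
definition rooted_tree :: "'a set \<Rightarrow> ('a \<Rightarrow> 'a) \<Rightarrow> 'a \<Rightarrow> bool" where
  "rooted_tree V par rt \<longleftrightarrow> finite V \<and> rt \<in> V \<and>
     (\<forall>w\<in>V. w \<noteq> rt \<longrightarrow> par w \<in> V) \<and>
     (\<forall>w\<in>V. \<exists>k. (par ^^ k) w = rt)"

definition succs :: "'a set \<Rightarrow> ('a \<Rightarrow> 'a) \<Rightarrow> 'a \<Rightarrow> 'a \<Rightarrow> 'a set" where
  "succs V par rt v = {w \<in> V. w \<noteq> rt \<and> par w = v}"

text \<open>Contraction of the edge from the root rt to its successor c: rt is erased,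
all successors of rt are re-attached to c, which becomes the new root.\<close>
definition contract_par :: "('a \<Rightarrow> 'a) \<Rightarrow> 'a \<Rightarrow> 'a \<Rightarrow> ('a \<Rightarrow> 'a)" where
  "contract_par par rt c = (\<lambda>w. if par w = rt then c else par w)"

end

theory Submission
  imports Defs
begin

text \<open>Contracting the edge from the root to a successor c leaves the successor set of every
other surviving node untouched, and the new root inherits the old root's other successors
together with the original successors of c. By induction, at every stage the successors of
the root's children are their successors in the original tree; hence, with
n c = r c + (sum of max 0 (n w) over those successors), the step from stage i to i+1 replaces
max 0 (n c) in s i by n c - r c, giving s (i+1) + r (v (i+1)) = s i + n c - max 0 (n c) \<le> s i.\<close>

lemma succs_contract_par_other:
  assumes "c \<in> succs V par rt rt" "u \<noteq> rt" "u \<noteq> c"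
  shows "succs (V - {rt}) (contract_par par rt c) c u = succs V par rt u"
  using assms unfolding succs_def contract_par_def by auto

lemma succs_contract_par_root:
  assumes "c \<in> succs V par rt rt"
  shows "succs (V - {rt}) (contract_par par rt c) c c
           = (succs V par rt rt - {c}) \<union> succs V par rt c"
  using assms unfolding succs_def contract_par_def by auto

lemma sum_succs_contract_par_root:
  fixes f :: "'a \<Rightarrow> 'b::comm_monoid_add"
  assumes "finite V" "c \<in> succs V par rt rt"
  shows "(\<Sum>w\<in>succs (V - {rt}) (contract_par par rt c) c c. f w) + f c
           = (\<Sum>w\<in>succs V par rt rt. f w) + (\<Sum>w\<in>succs V par rt c. f w)"
proof -
  have fin: "finite (succs V par rt v)" for v
    using assms(1) unfolding succs_def by simp
  have disj: "(succs V par rt rt - {c}) \<inter> succs V par rt c = {}"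
    using assms(2) unfolding succs_def by auto
  have "(\<Sum>w\<in>succs V par rt rt. f w) = f c + (\<Sum>w\<in>succs V par rt rt - {c}. f w)"
    using assms(2) fin by (simp add: sum.remove)
  then show ?thesis
    using disj fin
    by (simp add: succs_contract_par_root[OF assms(2)] sum.union_disjoint ac_simps)
qed

lemma contraction_nodes_subset:
  assumes "V 0 = V0"
    and "\<forall>i<m. V (Suc i) = V i - {v i}"
  shows "j \<le> m \<Longrightarrow> V j \<subseteq> V0"
  using assms by (induction j) auto

lemma contraction_succs_unchanged:
  assumes start: "V 0 = V0" "P 0 = par0" "v 0 = v0"
    and steps: "\<forall>i<m. v (Suc i) \<in> succs (V i) (P i) (v i) (v i)
                    \<and> V (Suc i) = V i - {v i}
                    \<and> P (Suc i) = contract_par (P i) (v i) (v (Suc i))"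
  shows "j \<le> m \<Longrightarrow> u \<in> V j - {v j} \<Longrightarrow> succs (V j) (P j) (v j) u = succs V0 par0 v0 u"
proof (induction j arbitrary: u)
  case 0
  then show ?case using start by simp
next
  case (Suc j)
  then have step: "v (Suc j) \<in> succs (V j) (P j) (v j) (v j)"
      "V (Suc j) = V j - {v j}" "P (Suc j) = contract_par (P j) (v j) (v (Suc j))"
    using steps by auto
  have "u \<in> V j - {v j}" "u \<noteq> v (Suc j)"
    using Suc.prems(2) step(2) by auto
  then show ?case
    using Suc.IH Suc.prems(1) step succs_contract_par_other[OF step(1)] by simp
qed

theorem mainTheorem3:
  fixes V0 :: "'a set" and par0 :: "'a \<Rightarrow> 'a" and v0 :: 'a
    and r :: "'a \<Rightarrow> int" and n :: "'a \<Rightarrow> int"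
    and V :: "nat \<Rightarrow> 'a set" and P :: "nat \<Rightarrow> 'a \<Rightarrow> 'a" and v :: "nat \<Rightarrow> 'a"
    and m :: nat
  assumes tree: "rooted_tree V0 par0 v0"
    and n_def: "\<forall>u\<in>V0. n u = r u + (\<Sum>w\<in>succs V0 par0 v0 u. max 0 (n w))"
    and start: "V 0 = V0" "P 0 = par0" "v 0 = v0"
    and steps: "\<forall>i<m. v (Suc i) \<in> succs (V i) (P i) (v i) (v i)
                    \<and> V (Suc i) = V i - {v i}
                    \<and> P (Suc i) = contract_par (P i) (v i) (v (Suc i))"
    and i: "i < m"
  shows "(\<Sum>w\<in>succs (V (Suc i)) (P (Suc i)) (v (Suc i)) (v (Suc i)). max 0 (n w))
           + r (v (Suc i))
         \<le> (\<Sum>w\<in>succs (V i) (P i) (v i) (v i). max 0 (n w))"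
proof -
  let ?c = "v (Suc i)" and ?f = "\<lambda>w. max 0 (n w)"
  have c: "?c \<in> succs (V i) (P i) (v i) (v i)" and step:
      "V (Suc i) = V i - {v i}" "P (Suc i) = contract_par (P i) (v i) ?c"
    using steps i by auto
  have sub: "V i \<subseteq> V0"
    using contraction_nodes_subset[of V V0 m v i] start steps i by auto
  have fin: "finite (V i)"
    using tree sub finite_subset unfolding rooted_tree_def by blast
  have "?c \<in> V i - {v i}" and "?c \<in> V0"
    using c sub unfolding succs_def by auto
  then have "(\<Sum>w\<in>succs (V i) (P i) (v i) ?c. ?f w) = n ?c - r ?c"
    using contraction_succs_unchanged[OF start steps, of i ?c] i n_def by simp
  then have "(\<Sum>w\<in>succs (V (Suc i)) (P (Suc i)) ?c ?c. ?f w) + ?f ?c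
               = (\<Sum>w\<in>succs (V i) (P i) (v i) (v i). ?f w) + (n ?c - r ?c)"
    using sum_succs_contract_par_root[OF fin c, of ?f] step by simp
  then show ?thesis by linarith
qed

end
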